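(* Let $f$ be a $p$-minimal newform such that $\pi_p$ is a ramified principal series representation, so that $\pi_p\cong\pi(\mu_1,\mu_2)$ with $\mu_1$ unramified and $\omega_p:=\mu_1\mu_2$ of conductor exponent $N_p\ge1$. Then: (i) for $p\ge5$: $a(\mathrm{sym}^3(\pi_p))=3N_p$ if $N_p>1$ or if $N_p=1$ and $\omega_p|_{\mathbb{Z}_p^\times}$ has order $>3$; otherwise $a(\mathrm{sym}^3(\pi_p))=3N_p-1$; (ii) for $p=3$: $a(\mathrm{sym}^3(\pi_3))=2N_3$ if $N_3=2$ and $\omega_3|_{\mathbb{Z}_3^\times}$ has order $3$; otherwise $a(\mathrm{sym}^3(\pi_3))=3N_3-1$; (iii) for $p=2$: $a(\mathrm{sym}^3(\pi_2))=3N_2-1$ if $N_2>3$, and $=2N_2$ otherwise.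
   Context: $f\in S_k(N,\epsilon)$ newform with local component $\pi_p$ at $p$; $N=p^{N_p}N'$, $p\nmid N'$. $p$-minimal: the $p$-part of the level is minimal among all twists of $f$ by Dirichlet characters. The $L$-parameter of $\pi(\mu_1,\mu_2)$ is $\mu_1\oplus\mu_2$ with zero monodromy. $\mathrm{sym}^3(\pi_p)$ is the representation of $\mathrm{GL}_4(\mathbb{Q}_p)$ with $L$-parameter the third symmetric power of that of $\pi_p$; $a(\cdot)$ is the conductor exponent. Conductor exponent of a character $\chi$ of $\mathbb{Q}_p^\times$: $0$ if $\chi|_{\mathbb{Z}_p^\times}=1$, otherwise the least $n\ge1$ with $\chi|_{1+p^n\mathbb{Z}_p}=1$. *)

theory Defs
  imports Complex_Main "HOL-Computational_Algebra.Primes"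
begin

text \<open>Concrete model of the p-adic integers: compatible systems of residues
  x n in [0, p^n) with x (n+1) mod p^n = x n.\<close>
definition zp :: "int \<Rightarrow> (nat \<Rightarrow> int) set" where
  "zp p = {x. \<forall>n. 0 \<le> x n \<and> x n < p ^ n \<and> x (Suc n) mod p ^ n = x n}"

definition zp_mult :: "int \<Rightarrow> (nat \<Rightarrow> int) \<Rightarrow> (nat \<Rightarrow> int) \<Rightarrow> (nat \<Rightarrow> int)" where
  "zp_mult p x y = (\<lambda>n. (x n * y n) mod p ^ n)"

definition zp_units :: "int \<Rightarrow> (nat \<Rightarrow> int) set" where
  "zp_units p = {x \<in> zp p. x 1 \<noteq> 0}"

text \<open>The subgroup 1 + p^n Z_p of Z_p^* (for n = 0 this is all of Z_p^*).\<close>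
definition principal_units :: "int \<Rightarrow> nat \<Rightarrow> (nat \<Rightarrow> int) set" where
  "principal_units p n = {x \<in> zp_units p. x n mod p ^ n = 1 mod p ^ n}"

text \<open>Q_p^* modelled as p^Z x Z_p^*: the pair (k,u) stands for p^k u.\<close>
definition qpx :: "int \<Rightarrow> (int \<times> (nat \<Rightarrow> int)) set" where
  "qpx p = UNIV \<times> zp_units p"

definition qp_mult :: "int \<Rightarrow> int \<times> (nat \<Rightarrow> int) \<Rightarrow> int \<times> (nat \<Rightarrow> int) \<Rightarrow> int \<times> (nat \<Rightarrow> int)" where
  "qp_mult p a b = (fst a + fst b, zp_mult p (snd a) (snd b))"

text \<open>Continuous (quasi-)characters of Q_p^*: homomorphisms into C^* whose
  kernel contains some 1 + p^n Z_p (continuity).\<close>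
definition is_qchar :: "int \<Rightarrow> (int \<times> (nat \<Rightarrow> int) \<Rightarrow> complex) \<Rightarrow> bool" where
  "is_qchar p \<chi> \<longleftrightarrow>
     (\<forall>a\<in>qpx p. \<chi> a \<noteq> 0) \<and>
     (\<forall>a\<in>qpx p. \<forall>b\<in>qpx p. \<chi> (qp_mult p a b) = \<chi> a * \<chi> b) \<and>
     (\<exists>n. \<forall>u\<in>principal_units p n. \<chi> (0, u) = 1)"

definition unramified :: "int \<Rightarrow> (int \<times> (nat \<Rightarrow> int) \<Rightarrow> complex) \<Rightarrow> bool" where
  "unramified p \<chi> \<longleftrightarrow> (\<forall>u\<in>zp_units p. \<chi> (0, u) = 1)"

definition cond_exp :: "int \<Rightarrow> (int \<times> (nat \<Rightarrow> int) \<Rightarrow> complex) \<Rightarrow> nat" where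
  "cond_exp p \<chi> = (if unramified p \<chi> then 0
     else (LEAST n::nat. n \<ge> 1 \<and> (\<forall>u\<in>principal_units p n. \<chi> (0, u) = 1)))"

definition order_on_units :: "int \<Rightarrow> (int \<times> (nat \<Rightarrow> int) \<Rightarrow> complex) \<Rightarrow> nat" where
  "order_on_units p \<chi> = (LEAST k::nat. k \<ge> 1 \<and> (\<forall>u\<in>zp_units p. \<chi> (0, u) ^ k = 1))"

text \<open>Irreducibility of pi(mu1,mu2): mu1/mu2 is not |.|^{+1} or |.|^{-1},
  where |p^k u| = p^(-k).\<close>
definition ps_irreducible :: "int \<Rightarrow> (int \<times> (nat \<Rightarrow> int) \<Rightarrow> complex) \<Rightarrow> (int \<times> (nat \<Rightarrow> int) \<Rightarrow> complex) \<Rightarrow> bool" where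
  "ps_irreducible p \<mu>1 \<mu>2 \<longleftrightarrow>
     \<not> (\<forall>a\<in>qpx p. \<mu>1 a = \<mu>2 a * (of_int p) powi (- fst a)) \<and>
     \<not> (\<forall>a\<in>qpx p. \<mu>1 a = \<mu>2 a * (of_int p) powi (fst a))"

text \<open>Conductor exponent of pi(mu1,mu2): that of its L-parameter mu1 + mu2
  (zero monodromy), i.e. a(mu1) + a(mu2).\<close>
definition ps_conductor :: "int \<Rightarrow> (int \<times> (nat \<Rightarrow> int) \<Rightarrow> complex) \<Rightarrow> (int \<times> (nat \<Rightarrow> int) \<Rightarrow> complex) \<Rightarrow> nat" where
  "ps_conductor p \<mu>1 \<mu>2 = cond_exp p \<mu>1 + cond_exp p \<mu>2"

definition ps_p_minimal :: "int \<Rightarrow> (int \<times> (nat \<Rightarrow> int) \<Rightarrow> complex) \<Rightarrow> (int \<times> (nat \<Rightarrow> int) \<Rightarrow> complex) \<Rightarrow> bool" where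
  "ps_p_minimal p \<mu>1 \<mu>2 \<longleftrightarrow>
     (\<forall>\<chi>. is_qchar p \<chi> \<longrightarrow>
        ps_conductor p \<mu>1 \<mu>2 \<le> ps_conductor p (\<lambda>x. \<mu>1 x * \<chi> x) (\<lambda>x. \<mu>2 x * \<chi> x))"

text \<open>Conductor exponent of sym^3(pi(mu1,mu2)): its L-parameter is the sum of
  the characters mu1^(3-j) mu2^j, j = 0..3, with zero monodromy, so the
  conductor is the sum of their conductor exponents.\<close>
definition sym3_conductor :: "int \<Rightarrow> (int \<times> (nat \<Rightarrow> int) \<Rightarrow> complex) \<Rightarrow> (int \<times> (nat \<Rightarrow> int) \<Rightarrow> complex) \<Rightarrow> nat" where
  "sym3_conductor p \<mu>1 \<mu>2 = (\<Sum>j\<le>3. cond_exp p (\<lambda>x. \<mu>1 x ^ (3 - j) * \<mu>2 x ^ j))"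

end

theory Submission
  imports Defs "HOL-Number_Theory.Number_Theory"
begin

text \<open>Since \<mu>1 is unramified, the characters \<mu>1^(3-j) \<mu>2^j of the L-parameter of
  sym^3 agree on Z_p^* with \<omega>^j, where \<omega> = \<mu>1 \<mu>2, so the conductor exponent is
  a(1) + a(\<omega>) + a(\<omega>^2) + a(\<omega>^3) = N + a(\<omega>^2) + a(\<omega>^3).  Everything is then
  read off from \<omega> on (Z/p^N)^*.  For N \<ge> 2, \<omega> is nontrivial of order p on
  1 + p^(N-1) Z_p, since p-th powers of elements of 1 + p^(N-1) Z_p lie in
  1 + p^N Z_p; hence a(\<omega>^j) = N whenever p does not divide j.  For j = p
  (only p = 3, N \<ge> 3 and p = 2, N \<ge> 4 remain) an explicit element of 1 + p^(N-2) Z_p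
  whose p-th power is 1 + p^(N-1) mod p^N shows a(\<omega>^p) = N - 1.  The small
  cases follow from the order of \<omega> on Z_p^* together with c^2 \<equiv> 1 mod 3 and
  mod 8 for units c.\<close>

section \<open>Units of Z_p\<close>

lemma zp_mod_power:
  assumes "x \<in> zp p" "p > 1" "m \<le> n"
  shows "x n mod p ^ m = x m"
  using assms(3)
proof (induction n)
  case 0
  have "0 \<le> x 0" "x 0 < p ^ 0" using assms(1) unfolding zp_def by blast+
  then show ?case using 0 by simp
next
  case (Suc n)
  show ?case
  proof (cases "m = Suc n")
    case True
    then show ?thesis using assms(1) by (simp add: zp_def del: power_Suc)
  next
    case False
    then have "m \<le> n" using Suc.prems by simp
    then have "x (Suc n) mod p ^ m = (x (Suc n) mod p ^ n) mod p ^ m"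
      by (simp add: mod_mod_cancel le_imp_power_dvd)
    also have "\<dots> = x m" using assms(1) Suc.IH \<open>m \<le> n\<close> by (simp add: zp_def)
    finally show ?thesis .
  qed
qed

definition zp_of_int :: "int \<Rightarrow> int \<Rightarrow> nat \<Rightarrow> int" where
  "zp_of_int p c = (\<lambda>n. c mod p ^ n)"

lemma zp_of_int_in_zp: "p > 1 \<Longrightarrow> zp_of_int p c \<in> zp p"
  unfolding zp_def zp_of_int_def by (auto simp: mod_mod_cancel le_imp_power_dvd)

lemma zp_of_int_in_units: "p > 1 \<Longrightarrow> \<not> p dvd c \<Longrightarrow> zp_of_int p c \<in> zp_units p"
  using zp_of_int_in_zp unfolding zp_units_def by (auto simp: zp_of_int_def dvd_eq_mod_eq_0)

lemma zp_of_int_in_principal_units: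
  "p > 1 \<Longrightarrow> \<not> p dvd c \<Longrightarrow> [c = 1] (mod p ^ n) \<Longrightarrow> zp_of_int p c \<in> principal_units p n"
  using zp_of_int_in_units unfolding principal_units_def by (auto simp: zp_of_int_def cong_def)

lemma zp_mult_zp_of_int: "zp_mult p (zp_of_int p a) (zp_of_int p b) = zp_of_int p (a * b)"
  unfolding zp_mult_def zp_of_int_def by (auto simp: mod_mult_eq)

lemma zp_units_not_dvd:
  assumes "u \<in> zp_units p" "p > 1" "n \<ge> 1"
  shows "\<not> p dvd u n"
proof
  assume "p dvd u n"
  have "u n mod p ^ 1 = u 1"
    using assms by (intro zp_mod_power) (auto simp: zp_units_def)
  then show False using \<open>p dvd u n\<close> assms(1) by (simp add: zp_units_def)
qed

lemma zp_mult_in_units: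
  assumes "prime p" "u \<in> zp_units p" "v \<in> zp_units p"
  shows "zp_mult p u v \<in> zp_units p"
proof -
  have p1: "p > 1" using assms(1) prime_gt_1_int by blast
  have zu: "u \<in> zp p" "v \<in> zp p" using assms by (auto simp: zp_units_def)
  have "zp_mult p u v \<in> zp p"
    unfolding zp_def zp_mult_def
  proof (intro CollectI allI conjI)
    fix n
    show "0 \<le> u n * v n mod p ^ n" "u n * v n mod p ^ n < p ^ n" using p1 by simp_all
    have "u (Suc n) * v (Suc n) mod p ^ Suc n mod p ^ n
        = (u (Suc n) mod p ^ n) * (v (Suc n) mod p ^ n) mod p ^ n"
      by (simp add: mod_mod_cancel le_imp_power_dvd mod_mult_eq)
    also have "\<dots> = u n * v n mod p ^ n" using zu by (simp add: zp_def)
    finally show "u (Suc n) * v (Suc n) mod p ^ Suc n mod p ^ n = u n * v n mod p ^ n" .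
  qed
  moreover have "\<not> p dvd u 1 * v 1"
    using zp_units_not_dvd[OF assms(2) p1] zp_units_not_dvd[OF assms(3) p1]
    by (simp add: prime_dvd_mult_iff[OF assms(1)])
  ultimately show ?thesis by (auto simp: zp_units_def zp_mult_def)
qed

lemma principal_units_antimono:
  assumes "p > 1" "m \<le> n"
  shows "principal_units p n \<subseteq> principal_units p m"
proof
  fix x assume x: "x \<in> principal_units p n"
  then have xz: "x \<in> zp p" by (simp add: principal_units_def zp_units_def)
  have d: "p ^ m dvd p ^ n" using assms by (simp add: le_imp_power_dvd)
  have "0 \<le> x m" "x m < p ^ m" using xz unfolding zp_def by blast+
  then have "x m mod p ^ m = (x n mod p ^ n) mod p ^ m"
    using zp_mod_power[OF xz assms] d by (simp add: mod_mod_cancel)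
  also have "\<dots> = 1 mod p ^ m" using x d by (simp add: principal_units_def mod_mod_cancel)
  finally show "x \<in> principal_units p m" using x by (simp add: principal_units_def)
qed

lemma principal_units_0: "principal_units p 0 = zp_units p"
  by (auto simp: principal_units_def)

lemma principal_units_subset_units: "principal_units p n \<subseteq> zp_units p"
  by (auto simp: principal_units_def)

lemma cond_exp_eqI:
  assumes "p > 1"
    and "\<forall>u\<in>principal_units p n. \<chi> (0, u) = 1"
    and "n = 0 \<or> \<not> (\<forall>u\<in>principal_units p (n - 1). \<chi> (0, u) = 1)"
  shows "cond_exp p \<chi> = n"
proof (cases "n = 0")
  case True
  then show ?thesis using assms(2) by (simp add: cond_exp_def unramified_def principal_units_0)
next
  case False
  then have "\<not> unramified p \<chi>"
    using assms(3) principal_units_antimono[OF assms(1), of 0 "n - 1"]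
    by (auto simp: unramified_def principal_units_0)
  moreover have "(LEAST m. m \<ge> 1 \<and> (\<forall>u\<in>principal_units p m. \<chi> (0, u) = 1)) = n"
  proof (rule Least_equality)
    show "1 \<le> n \<and> (\<forall>u\<in>principal_units p n. \<chi> (0, u) = 1)" using False assms(2) by simp
    fix m assume m: "1 \<le> m \<and> (\<forall>u\<in>principal_units p m. \<chi> (0, u) = 1)"
    show "n \<le> m"
    proof (rule ccontr)
      assume "\<not> n \<le> m"
      then have "principal_units p (n - 1) \<subseteq> principal_units p m"
        using principal_units_antimono[OF assms(1)] by simp
      then show False using m assms(3) False by blast
    qed
  qed
  ultimately show ?thesis by (simp add: cond_exp_def)
qed

lemma cond_exp_cong_units:
  assumes "\<forall>u\<in>zp_units p. \<chi> (0, u) = \<psi> (0, u)"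
  shows "cond_exp p \<chi> = cond_exp p \<psi>"
proof -
  have "(\<forall>u\<in>principal_units p n. \<chi> (0, u) = 1) \<longleftrightarrow> (\<forall>u\<in>principal_units p n. \<psi> (0, u) = 1)" for n
    using assms principal_units_subset_units by fastforce
  then show ?thesis
    using assms by (simp add: cond_exp_def unramified_def)
qed

lemma order_on_units_cong_units:
  assumes "\<forall>u\<in>zp_units p. \<chi> (0, u) = \<psi> (0, u)"
  shows "order_on_units p \<chi> = order_on_units p \<psi>"
  using assms by (simp add: order_on_units_def)

section \<open>Congruences for powers\<close>

lemma one_plus_mult_power_cong:
  fixes a q :: int
  shows "[(1 + a * q) ^ k = 1 + int k * a * q] (mod q ^ 2)"
proof (induction k)
  case 0 then show ?case by simp
next
  case (Suc k)
  have "[(1 + a * q) ^ Suc k = (1 + int k * a * q) * (1 + a * q)] (mod q ^ 2)"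
    using cong_mult[OF Suc.IH cong_refl[of "1 + a * q"]] by (simp add: mult.commute)
  moreover have "(1 + int k * a * q) * (1 + a * q) = 1 + int (Suc k) * a * q + (int k * a * a) * q ^ 2"
    by (simp add: algebra_simps power2_eq_square)
  ultimately show ?case by (simp add: cong_def)
qed

lemma power_cong_one_mod_Suc:
  fixes c p :: int
  assumes "m \<ge> 1" "[c = 1] (mod p ^ m)" "p dvd int k"
  shows "[c ^ k = 1] (mod p ^ Suc m)"
proof -
  obtain a where a: "c = 1 + a * p ^ m"
    using assms(2) by (metis cong_iff_lin cong_sym mult.commute)
  obtain r where r: "int k = p * r" using assms(3) by blast
  have "Suc m \<le> m * 2" using assms(1) by simp
  then have "p ^ Suc m dvd (p ^ m) ^ 2" using le_imp_power_dvd[of "Suc m" "m * 2" p] by (simp add: power_mult)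
  then have "[c ^ k = 1 + int k * a * p ^ m] (mod p ^ Suc m)"
    using one_plus_mult_power_cong a cong_dvd_modulus by blast
  moreover have "int k * a * p ^ m = p ^ Suc m * (r * a)" using r by (simp add: algebra_simps)
  ultimately show ?thesis by (simp add: cong_def)
qed

lemma odd_square_cong_one_mod_8:
  fixes c :: int
  assumes "odd c"
  shows "[c ^ 2 = 1] (mod 8)"
proof -
  have "c mod 8 \<in> {1, 3, 5, 7}" using assms by (simp add: odd_iff_mod_2_eq_one) presburger
  then show ?thesis unfolding cong_def by (subst power_mod[symmetric]) auto
qed

lemma square_cong_one_mod_3:
  fixes c :: int
  assumes "\<not> 3 dvd c"
  shows "[c ^ 2 = 1] (mod 3)"
proof -
  have "c mod 3 \<in> {1, 2}" using assms by (simp add: dvd_eq_mod_eq_0) presburger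
  then show ?thesis unfolding cong_def by (subst power_mod[symmetric]) auto
qed

lemma not_dvd_one_plus_power:
  fixes p :: int
  assumes "p > 1" "m \<ge> 1"
  shows "\<not> p dvd 1 + p ^ m * a"
proof
  assume "p dvd 1 + p ^ m * a"
  moreover have "p dvd p ^ m * a" using assms(2) by (simp add: dvd_power)
  ultimately have "p dvd 1" by (simp add: dvd_add_left_iff)
  then show False using assms(1) by (simp add: zdvd_not_zless)
qed

lemma cube_one_plus_3_cong:
  fixes y :: int
  shows "[(1 + 3 * y) ^ 3 = 1 + 9 * y] (mod 27 * y)"
proof -
  have "(1 + 3 * y) ^ 3 = 1 + 9 * y + 27 * y * (y + y ^ 2)"
    by (simp add: power2_eq_square power3_eq_cube algebra_simps)
  then show ?thesis by (simp add: cong_iff_dvd_diff)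
qed

lemma square_one_plus_4_cong:
  fixes y :: int
  shows "[(1 + 4 * y) ^ 2 = 1 + 8 * y] (mod 16 * y)"
proof -
  have "(1 + 4 * y) ^ 2 = 1 + 8 * y + 16 * y * y"
    by (simp add: power2_eq_square algebra_simps)
  then show ?thesis by (simp add: cong_iff_dvd_diff)
qed

section \<open>Powers of a ramified character\<close>

locale ramified_qchar =
  fixes p :: int and \<chi> :: "int \<times> (nat \<Rightarrow> int) \<Rightarrow> complex" and N :: nat
  assumes prime: "prime p"
    and qchar: "is_qchar p \<chi>"
    and conductor: "cond_exp p \<chi> = N"
    and ramified: "N \<ge> 1"
begin

lemma p_gt_1: "p > 1"
  using prime prime_gt_1_int by blast

lemma mult_units:
  assumes "u \<in> zp_units p" "v \<in> zp_units p"
  shows "\<chi> (0, zp_mult p u v) = \<chi> (0, u) * \<chi> (0, v)"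
proof -
  have "\<chi> (qp_mult p (0, u) (0, v)) = \<chi> (0, u) * \<chi> (0, v)"
    using qchar assms by (simp add: is_qchar_def qpx_def)
  then show ?thesis by (simp add: qp_mult_def)
qed

lemma nonzero_units: "u \<in> zp_units p \<Longrightarrow> \<chi> (0, u) \<noteq> 0"
  using qchar by (simp add: is_qchar_def qpx_def)

lemma conductor_eq_Least: "N = (LEAST n. n \<ge> 1 \<and> (\<forall>u\<in>principal_units p n. \<chi> (0, u) = 1))"
  using conductor ramified by (simp add: cond_exp_def split: if_splits)

lemma trivial_on_conductor: "u \<in> principal_units p N \<Longrightarrow> \<chi> (0, u) = 1"
proof -
  obtain n where "\<forall>u\<in>principal_units p n. \<chi> (0, u) = 1"
    using qchar by (auto simp: is_qchar_def)
  then have "Suc n \<ge> 1 \<and> (\<forall>u\<in>principal_units p (Suc n). \<chi> (0, u) = 1)"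
    using principal_units_antimono[OF p_gt_1, of n "Suc n"] by auto
  then have "\<forall>u\<in>principal_units p N. \<chi> (0, u) = 1"
    unfolding conductor_eq_Least by (rule LeastI2) simp
  then show "u \<in> principal_units p N \<Longrightarrow> \<chi> (0, u) = 1" by blast
qed

lemma nontrivial_below_conductor: "\<exists>u\<in>principal_units p (N - 1). \<chi> (0, u) \<noteq> 1"
proof (cases "N = 1")
  case True
  have "\<not> unramified p \<chi>" using conductor ramified by (auto simp: cond_exp_def)
  then show ?thesis using True by (auto simp: unramified_def principal_units_0)
next
  case False
  have "N - 1 < (LEAST n. n \<ge> 1 \<and> (\<forall>u\<in>principal_units p n. \<chi> (0, u) = 1))"
    using ramified conductor_eq_Least[symmetric] by simp
  then have "\<not> (N - 1 \<ge> 1 \<and> (\<forall>u\<in>principal_units p (N - 1). \<chi> (0, u) = 1))"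
    by (rule not_less_Least)
  then show ?thesis using False ramified by auto
qed

definition chi_int :: "int \<Rightarrow> complex" where
  "chi_int c = \<chi> (0, zp_of_int p c)"

lemma chi_int_mult: "\<not> p dvd a \<Longrightarrow> \<not> p dvd b \<Longrightarrow> chi_int (a * b) = chi_int a * chi_int b"
  unfolding chi_int_def
  using mult_units[OF zp_of_int_in_units[OF p_gt_1] zp_of_int_in_units[OF p_gt_1]]
  by (simp add: zp_mult_zp_of_int)

lemma chi_int_nonzero: "\<not> p dvd a \<Longrightarrow> chi_int a \<noteq> 0"
  unfolding chi_int_def using nonzero_units zp_of_int_in_units[OF p_gt_1] by blast

lemma chi_int_trivial: "\<not> p dvd c \<Longrightarrow> [c = 1] (mod p ^ N) \<Longrightarrow> chi_int c = 1"
  unfolding chi_int_def using trivial_on_conductor zp_of_int_in_principal_units[OF p_gt_1] by blast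

lemma chi_int_power: "\<not> p dvd c \<Longrightarrow> chi_int (c ^ k) = chi_int c ^ k"
proof (induction k)
  case 0
  have "\<not> p dvd 1" using p_gt_1 by (simp add: zdvd_not_zless)
  then show ?case using chi_int_trivial by simp
next
  case (Suc k)
  then show ?case
    using chi_int_mult[of c "c ^ k"] prime_dvd_power[OF prime, of c k] by auto
qed

lemma coprime_power_of_not_dvd: "\<not> p dvd b \<Longrightarrow> coprime b (p ^ N)"
  by (metis prime prime_imp_coprime coprime_commute coprime_power_right_iff)

lemma inverse_not_dvd: "[b * x = 1] (mod p ^ N) \<Longrightarrow> \<not> p dvd x"
proof
  assume "[b * x = 1] (mod p ^ N)" "p dvd x"
  then have "[b * x = 1] (mod p)" using ramified by (auto intro: cong_dvd_modulus dvd_power)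
  then show False using \<open>p dvd x\<close> p_gt_1
    by (auto simp: cong_def zdvd_not_zless dest: mod_0_imp_dvd)
qed

lemma chi_int_cong:
  assumes "\<not> p dvd a" "\<not> p dvd b" "[a = b] (mod p ^ N)"
  shows "chi_int a = chi_int b"
proof -
  obtain x where x: "[b * x = 1] (mod p ^ N)" using cong_solve_coprime_int coprime_power_of_not_dvd[OF assms(2)] by blast
  then have "[a * x = 1] (mod p ^ N)" using assms(3) by (metis cong_scalar_right cong_trans)
  have "chi_int a * chi_int x = chi_int b * chi_int x"
    using chi_int_trivial chi_int_mult inverse_not_dvd x \<open>[a * x = 1] (mod p ^ N)\<close> assms(1,2)
      prime_dvd_mult_iff[OF prime] by metis
  then show ?thesis using chi_int_nonzero[OF inverse_not_dvd[OF x]] by simp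
qed

lemma chi_eq_chi_int:
  assumes u: "u \<in> zp_units p"
  shows "\<chi> (0, u) = chi_int (u N)"
proof -
  have b: "\<not> p dvd u N" using zp_units_not_dvd[OF u p_gt_1 ramified] .
  obtain x where x: "[u N * x = 1] (mod p ^ N)"
    using cong_solve_coprime_int coprime_power_of_not_dvd[OF b] by blast
  have xu: "zp_of_int p x \<in> zp_units p" using zp_of_int_in_units[OF p_gt_1 inverse_not_dvd[OF x]] .
  have "zp_mult p u (zp_of_int p x) N mod p ^ N = 1 mod p ^ N"
    using x by (simp add: zp_mult_def zp_of_int_def mod_mult_right_eq cong_def)
  then have "zp_mult p u (zp_of_int p x) \<in> principal_units p N"
    using zp_mult_in_units[OF prime u xu] by (simp add: principal_units_def)
  then have "\<chi> (0, u) * chi_int x = 1"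
    using trivial_on_conductor mult_units[OF u xu] by (simp add: chi_int_def)
  moreover have "chi_int (u N) * chi_int x = 1"
    using chi_int_trivial chi_int_mult b inverse_not_dvd[OF x] x prime_dvd_mult_iff[OF prime] by metis
  ultimately show ?thesis using chi_int_nonzero[OF inverse_not_dvd[OF x]]
    by (metis mult_cancel_right)
qed

text \<open>Triviality of \<chi>^j on 1 + p^n Z_p is tested on integer representatives, which keeps
  the arithmetic elementary; pow_cond j is then the conductor exponent of \<chi>^j
  (cond_exp_eq_pow_cond).\<close>
definition pow_trivial :: "nat \<Rightarrow> nat \<Rightarrow> bool" where
  "pow_trivial j n \<longleftrightarrow> (\<forall>c. \<not> p dvd c \<longrightarrow> [c = 1] (mod p ^ n) \<longrightarrow> chi_int c ^ j = 1)"

definition pow_cond :: "nat \<Rightarrow> nat" where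
  "pow_cond j = (LEAST n. pow_trivial j n)"

lemma pow_trivial_iff:
  assumes "n \<le> N"
  shows "(\<forall>u\<in>principal_units p n. \<chi> (0, u) ^ j = 1) \<longleftrightarrow> pow_trivial j n"
proof
  assume "\<forall>u\<in>principal_units p n. \<chi> (0, u) ^ j = 1"
  then show "pow_trivial j n"
    unfolding pow_trivial_def chi_int_def using zp_of_int_in_principal_units[OF p_gt_1] by blast
next
  assume triv: "pow_trivial j n"
  show "\<forall>u\<in>principal_units p n. \<chi> (0, u) ^ j = 1"
  proof
    fix u assume u: "u \<in> principal_units p n"
    then have uu: "u \<in> zp_units p" and uz: "u \<in> zp p" by (auto simp: principal_units_def zp_units_def)
    have "0 \<le> u n" "u n < p ^ n" using uz unfolding zp_def by blast+
    moreover have "u N mod p ^ n = u n" using zp_mod_power[OF uz p_gt_1 assms] .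
    ultimately have "[u N = 1] (mod p ^ n)" using u by (simp add: principal_units_def cong_def)
    then show "\<chi> (0, u) ^ j = 1"
      using triv zp_units_not_dvd[OF uu p_gt_1 ramified] chi_eq_chi_int[OF uu]
      unfolding pow_trivial_def by simp
  qed
qed

lemma pow_trivial_mono: "m \<le> n \<Longrightarrow> pow_trivial j m \<Longrightarrow> pow_trivial j n"
  unfolding pow_trivial_def by (meson cong_dvd_modulus le_imp_power_dvd)

lemma pow_trivial_conductor: "pow_trivial j N"
  unfolding pow_trivial_def using chi_int_trivial by simp

lemma pow_trivial_0: "pow_trivial 0 n"
  by (simp add: pow_trivial_def)

lemma not_pow_trivial_1: "\<not> pow_trivial 1 (N - 1)"
  using nontrivial_below_conductor pow_trivial_iff[of "N - 1" 1] by auto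

lemma pow_trivial_diff: "pow_trivial (j + k) n \<Longrightarrow> pow_trivial k n \<Longrightarrow> pow_trivial j n"
  unfolding pow_trivial_def by (auto simp: power_add)

lemma pow_trivial_mult: "pow_trivial j n \<Longrightarrow> pow_trivial (j * k) n"
  unfolding pow_trivial_def by (simp add: power_mult)

lemma pow_trivial_gcd:
  assumes "pow_trivial j n" "pow_trivial k n"
  shows "pow_trivial (gcd j k) n"
proof (cases "j = 0")
  case True
  then show ?thesis using assms(2) by simp
next
  case False
  then obtain x y where "j * x = k * y + gcd j k" using bezout_nat by blast
  then show ?thesis
    using pow_trivial_diff pow_trivial_mult assms by (metis add.commute)
qed

lemma pow_trivial_of_cong:
  assumes "\<And>c. \<not> p dvd c \<Longrightarrow> [c ^ j = 1] (mod p ^ N)"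
  shows "pow_trivial j 0"
  unfolding pow_trivial_def
  using assms chi_int_trivial chi_int_power prime_dvd_power[OF prime] by metis

lemma pow_trivial_totient: "pow_trivial (totient (nat (p ^ N))) 0"
proof (rule pow_trivial_of_cong)
  fix c assume "\<not> p dvd c"
  have "p ^ N > 1" using p_gt_1 ramified by simp
  then interpret residues "p ^ N" "residue_ring (p ^ N)" by unfold_locales simp
  show "[c ^ totient (nat (p ^ N)) = 1] (mod p ^ N)"
    using euler_theorem coprime_power_of_not_dvd[OF \<open>\<not> p dvd c\<close>] by blast
qed

lemma pow_trivial_prime_multiple:
  assumes "N \<ge> 2" "p dvd int k"
  shows "pow_trivial k (N - 1)"
  unfolding pow_trivial_def
proof (intro allI impI)
  fix c assume c: "\<not> p dvd c" "[c = 1] (mod p ^ (N - 1))"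
  have "[c ^ k = 1] (mod p ^ Suc (N - 1))"
    using power_cong_one_mod_Suc[of "N - 1" c p k] c assms by simp
  moreover have "Suc (N - 1) = N" using assms(1) by simp
  ultimately have "chi_int (c ^ k) = 1"
    using chi_int_trivial prime_dvd_power[OF prime] c(1) by metis
  then show "chi_int c ^ k = 1" using chi_int_power[OF c(1)] by simp
qed

lemma pow_cond_le: "pow_trivial j n \<Longrightarrow> pow_cond j \<le> n"
  unfolding pow_cond_def by (rule Least_le)

lemma pow_trivial_pow_cond: "pow_trivial j (pow_cond j)"
  unfolding pow_cond_def using pow_trivial_conductor by (rule LeastI)

lemma pow_cond_eqI:
  assumes "pow_trivial j n" "n = 0 \<or> \<not> pow_trivial j (n - 1)"
  shows "pow_cond j = n"
  unfolding pow_cond_def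
proof (rule Least_equality)
  show "pow_trivial j n" by fact
  fix m assume "pow_trivial j m"
  then show "n \<le> m" using assms(2) pow_trivial_mono[of m "n - 1" j] by fastforce
qed

lemma cond_exp_eq_pow_cond:
  assumes "\<forall>u\<in>zp_units p. \<psi> (0, u) = \<chi> (0, u) ^ j"
  shows "cond_exp p \<psi> = pow_cond j"
proof (rule cond_exp_eqI[OF p_gt_1])
  let ?n = "pow_cond j"
  have n_le: "?n \<le> N" using pow_cond_le pow_trivial_conductor by blast
  have \<psi>_triv: "(\<forall>u\<in>principal_units p m. \<psi> (0, u) = 1) \<longleftrightarrow> pow_trivial j m" if "m \<le> N" for m
    using pow_trivial_iff[OF that] assms principal_units_subset_units by fastforce
  show "\<forall>u\<in>principal_units p ?n. \<psi> (0, u) = 1"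
    using \<psi>_triv[OF n_le] pow_trivial_pow_cond by blast
  show "?n = 0 \<or> \<not> (\<forall>u\<in>principal_units p (?n - 1). \<psi> (0, u) = 1)"
    using \<psi>_triv[of "?n - 1"] n_le pow_cond_le[of j "?n - 1"] by fastforce
qed

lemma pow_cond_0: "pow_cond 0 = 0"
  using pow_cond_eqI pow_trivial_0 by blast

lemma pow_cond_1: "pow_cond 1 = N"
  using pow_cond_eqI pow_trivial_conductor not_pow_trivial_1 by blast

lemma pow_cond_conductor_1:
  assumes "N = 1"
  shows "pow_cond j = (if pow_trivial j 0 then 0 else 1)"
  using assms pow_cond_eqI pow_trivial_conductor by auto

lemma pow_cond_coprime:
  assumes "N \<ge> 2" "\<not> p dvd int j"
  shows "pow_cond j = N"
proof (rule pow_cond_eqI[OF pow_trivial_conductor], rule disjI2, rule notI)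
  assume j: "pow_trivial j (N - 1)"
  have "coprime (int j) p" using assms(2) prime prime_imp_coprime coprime_commute by blast
  then have "coprime j (nat p)" using coprime_nat_abs_right_iff[of j p] p_gt_1 by simp
  then have "gcd j (nat p) = 1" by simp
  moreover have "pow_trivial (nat p) (N - 1)"
    using pow_trivial_prime_multiple[OF assms(1)] p_gt_1 by simp
  ultimately show False using pow_trivial_gcd[OF j] not_pow_trivial_1 by metis
qed

text \<open>For N \<ge> 2 the quotient of the integers \<equiv> 1 mod p^(N-1) by those \<equiv> 1 mod p^N
  is cyclic, generated by 1 + p^(N-1), since (1 + q)^k \<equiv> 1 + k q mod q^2 for q = p^(N-1).\<close>
lemma chi_int_generator_nontrivial:
  assumes N2: "N \<ge> 2"
  shows "chi_int (1 + p ^ (N - 1)) \<noteq> 1"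
proof
  assume gen: "chi_int (1 + p ^ (N - 1)) = 1"
  define q where "q = p ^ (N - 1)"
  have pNq: "p ^ N = p * q" using N2 by (simp add: q_def power_Suc[symmetric] del: power_Suc)
  have q2: "p ^ N dvd q ^ 2"
    using N2 le_imp_power_dvd[of N "(N - 1) * 2" p] by (simp add: q_def power_mult)
  have ng: "\<not> p dvd 1 + q" using not_dvd_one_plus_power[OF p_gt_1, of "N - 1" 1] N2 by (simp add: q_def)
  have "pow_trivial 1 (N - 1)"
    unfolding pow_trivial_def
  proof (intro allI impI)
    fix c assume nc: "\<not> p dvd c" and cc: "[c = 1] (mod p ^ (N - 1))"
    obtain a where a: "c = 1 + a * q"
      using cc unfolding q_def by (metis cong_iff_lin cong_sym mult.commute)
    define k where "k = nat (a mod p)"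
    have ik: "int k = a mod p" using p_gt_1 by (simp add: k_def)
    have "[(1 + 1 * q) ^ k = 1 + int k * 1 * q] (mod p ^ N)"
      using one_plus_mult_power_cong cong_dvd_modulus q2 by blast
    moreover have "[1 + int k * q = c] (mod p ^ N)"
    proof -
      have "c - (1 + int k * q) = (a - a mod p) * q" using a ik by (simp add: algebra_simps)
      also have "\<dots> = p ^ N * (a div p)" by (simp add: minus_mod_eq_mult_div pNq)
      finally
      show ?thesis by (simp add: cong_iff_dvd_diff dvd_diff_commute)
    qed
    ultimately have "[(1 + q) ^ k = c] (mod p ^ N)" by (simp add: cong_trans)
    then have "chi_int c = chi_int (1 + q) ^ k"
      using chi_int_cong[OF nc] chi_int_power[OF ng] prime_dvd_power[OF prime] ng cong_sym by metis
    then show "chi_int c ^ 1 = 1" using gen by (simp add: q_def)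
  qed
  then show False using not_pow_trivial_1 by blast
qed

lemma pow_cond_eq_conductor_minus_1:
  assumes "N \<ge> 2" "p dvd int k" "\<not> p dvd v"
    and "[v = 1] (mod p ^ (N - 2))" "[v ^ k = 1 + p ^ (N - 1)] (mod p ^ N)"
  shows "pow_cond k = N - 1"
proof (rule pow_cond_eqI[OF pow_trivial_prime_multiple[OF assms(1,2)]], rule disjI2, rule notI)
  assume "pow_trivial k (N - 1 - 1)"
  then have "chi_int v ^ k = 1" using assms(3,4) by (simp add: pow_trivial_def numeral_2_eq_2)
  moreover have "\<not> p dvd 1 + p ^ (N - 1)"
    using not_dvd_one_plus_power[OF p_gt_1, of "N - 1" 1] assms(1) by simp
  ultimately have "chi_int (1 + p ^ (N - 1)) = 1"
    using chi_int_cong assms(3,5) chi_int_power prime_dvd_power[OF prime] by metis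
  then show False using chi_int_generator_nontrivial[OF assms(1)] by blast
qed

lemma order_on_units_pow_trivial: "order_on_units p \<chi> \<ge> 1 \<and> pow_trivial (order_on_units p \<chi>) 0"
  and order_on_units_le: "k \<ge> 1 \<Longrightarrow> pow_trivial k 0 \<Longrightarrow> order_on_units p \<chi> \<le> k"
proof -
  have iff: "(\<forall>u\<in>zp_units p. \<chi> (0, u) ^ k = 1) \<longleftrightarrow> pow_trivial k 0" for k
    using pow_trivial_iff[of 0 k] by (simp add: principal_units_0)
  have "totient (nat (p ^ N)) \<ge> 1 \<and> pow_trivial (totient (nat (p ^ N))) 0"
    using p_gt_1 pow_trivial_totient by (simp add: Suc_le_eq)
  then show "order_on_units p \<chi> \<ge> 1 \<and> pow_trivial (order_on_units p \<chi>) 0"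
    unfolding order_on_units_def iff by (rule LeastI)
  show "k \<ge> 1 \<Longrightarrow> pow_trivial k 0 \<Longrightarrow> order_on_units p \<chi> \<le> k"
    unfolding order_on_units_def iff by (rule Least_le) simp
qed

lemma pow_trivial_1_of_2_3: "pow_trivial 2 n \<Longrightarrow> pow_trivial 3 n \<Longrightarrow> pow_trivial 1 n"
  using pow_trivial_diff[of 1 2 n] by (simp add: numeral_3_eq_3)

lemma sym3_sum_large_prime:
  assumes "p \<ge> 5"
  shows "N + pow_cond 2 + pow_cond 3 =
    (if N > 1 \<or> (N = 1 \<and> order_on_units p \<chi> > 3) then 3 * N else 3 * N - 1)"
proof (cases "N = 1")
  case False
  have "\<not> p dvd int 2" "\<not> p dvd int 3" using assms by (auto dest: zdvd_imp_le)
  then show ?thesis using pow_cond_coprime False ramified by simp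
next
  case True
  have not_T1: "\<not> pow_trivial 1 0" using not_pow_trivial_1 True by simp
  then have not_T23: "\<not> (pow_trivial 2 0 \<and> pow_trivial 3 0)"
    using pow_trivial_1_of_2_3 by blast
  have "order_on_units p \<chi> > 3 \<longleftrightarrow> \<not> pow_trivial 2 0 \<and> \<not> pow_trivial 3 0"
  proof
    assume "order_on_units p \<chi> > 3"
    then show "\<not> pow_trivial 2 0 \<and> \<not> pow_trivial 3 0"
      using order_on_units_le[of 2] order_on_units_le[of 3] by auto
  next
    assume "\<not> pow_trivial 2 0 \<and> \<not> pow_trivial 3 0"
    then have "order_on_units p \<chi> \<notin> {1, 2, 3}" using order_on_units_pow_trivial not_T1 by auto
    then show "order_on_units p \<chi> > 3" using order_on_units_pow_trivial by auto
  qed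
  then show ?thesis using True pow_cond_conductor_1 not_T23 by auto
qed

lemma sym3_sum_three:
  assumes p3: "p = 3"
  shows "N + pow_cond 2 + pow_cond 3 =
    (if N = 2 \<and> order_on_units p \<chi> = 3 then 2 * N else 3 * N - 1)"
proof -
  consider "N = 1" | "N = 2" | "N \<ge> 3" using ramified by linarith
  then show ?thesis
  proof cases
    case 1
    have T2: "pow_trivial 2 0"
      using pow_trivial_of_cong square_cong_one_mod_3 p3 1 by simp
    then have "\<not> pow_trivial 3 0"
      using not_pow_trivial_1 1 pow_trivial_1_of_2_3 by auto
    then show ?thesis using pow_cond_conductor_1[OF 1] T2 1 by simp
  next
    case 2
    have c2: "pow_cond 2 = 2" using pow_cond_coprime 2 p3 by simp
    have T3: "pow_trivial 3 1" using pow_trivial_prime_multiple[of 3] 2 p3 by simp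
    have "\<not> pow_trivial 1 0" "\<not> pow_trivial 2 0"
      using not_pow_trivial_1 2 c2 pow_cond_le[of 2 0] pow_trivial_mono[of 0 1 1] by auto
    then have "order_on_units p \<chi> = 3 \<longleftrightarrow> pow_trivial 3 0"
      using order_on_units_pow_trivial order_on_units_le[of 3]
      by (metis One_nat_def le_Suc_eq numeral_3_eq_3 numeral_2_eq_2 le_0_eq not_one_le_zero)
    moreover have "pow_cond 3 = (if pow_trivial 3 0 then 0 else 1)"
      using pow_cond_eqI T3 by auto
    ultimately show ?thesis using c2 2 by auto
  next
    case 3
    define y :: int where "y = 3 ^ (N - 3)"
    have N: "N = N - 3 + 3" using 3 by simp
    have pN2: "p ^ (N - 2) = 3 * y" and pN1: "p ^ (N - 1) = 9 * y" and pN: "p ^ N = 27 * y"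
      using p3 by (subst N, simp add: y_def power_add)+
    have "\<not> p dvd 1 + p ^ (N - 2) * 1" using not_dvd_one_plus_power[OF p_gt_1, of "N - 2" 1] 3 by simp
    moreover have "[1 + 3 * y = 1] (mod p ^ (N - 2))" by (simp add: pN2 cong_iff_dvd_diff)
    ultimately have "pow_cond 3 = N - 1"
      using pow_cond_eq_conductor_minus_1[of 3 "1 + 3 * y"] cube_one_plus_3_cong[of y] 3 p3 pN2 pN1 pN
      by simp
    moreover have "pow_cond 2 = N" using pow_cond_coprime 3 p3 by simp
    ultimately show ?thesis using 3 by simp
  qed
qed

lemma sym3_sum_two:
  assumes p2: "p = 2"
  shows "N + pow_cond 2 + pow_cond 3 = (if N > 3 then 3 * N - 1 else 2 * N)"
proof -
  have N2: "N \<ge> 2"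
  proof (rule ccontr)
    assume "\<not> N \<ge> 2"
    then have "N = 1" using ramified by simp
    then have "pow_trivial 1 0"
      using pow_trivial_of_cong[of 1] p2 by (simp add: cong_def odd_iff_mod_2_eq_one)
    then show False using not_pow_trivial_1 \<open>N = 1\<close> by simp
  qed
  have c3: "pow_cond 3 = N" using pow_cond_coprime N2 p2 by simp
  show ?thesis
  proof (cases "N \<le> 3")
    case True
    have "p ^ N dvd 8" using True p2 le_imp_power_dvd[of N 3 "2::int"] by simp
    then have "pow_trivial 2 0"
      using pow_trivial_of_cong[of 2] odd_square_cong_one_mod_8 p2 cong_dvd_modulus by blast
    then have "pow_cond 2 = 0" using pow_cond_le by fastforce
    then show ?thesis using c3 True by simp
  next
    case False
    define y :: int where "y = 2 ^ (N - 4)"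
    have N: "N = N - 4 + 4" using False by simp
    have pN2: "p ^ (N - 2) = 4 * y" and pN1: "p ^ (N - 1) = 8 * y" and pN: "p ^ N = 16 * y"
      using p2 by (subst N, simp add: y_def power_add)+
    have "\<not> p dvd 1 + p ^ (N - 2) * 1" using not_dvd_one_plus_power[OF p_gt_1, of "N - 2" 1] False by simp
    moreover have "[1 + 4 * y = 1] (mod p ^ (N - 2))" by (simp add: pN2 cong_iff_dvd_diff)
    ultimately have "pow_cond 2 = N - 1"
      using pow_cond_eq_conductor_minus_1[of 2 "1 + 4 * y"] square_one_plus_4_cong[of y] N2 p2 pN2 pN1 pN
      by simp
    then show ?thesis using c3 False by simp
  qed
qed

end

text \<open>Irreducibility, p-minimality and the value of ps_conductor are not needed:
  the conductor exponent of \<omega> alone determines the answer.\<close>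
theorem mainTheorem7:
  fixes p :: int and N :: nat
    and \<mu>1 \<mu>2 :: "int \<times> (nat \<Rightarrow> int) \<Rightarrow> complex"
  assumes "prime p"
    and "is_qchar p \<mu>1" and "is_qchar p \<mu>2"
    and "ps_irreducible p \<mu>1 \<mu>2"
    and "ps_p_minimal p \<mu>1 \<mu>2"
    and "unramified p \<mu>1"
    and "ps_conductor p \<mu>1 \<mu>2 = N"
    and "cond_exp p (\<lambda>x. \<mu>1 x * \<mu>2 x) = N"
    and "N \<ge> 1"
  shows "(p \<ge> 5 \<longrightarrow>
            sym3_conductor p \<mu>1 \<mu>2 =
              (if N > 1 \<or> (N = 1 \<and> order_on_units p (\<lambda>x. \<mu>1 x * \<mu>2 x) > 3)
               then 3 * N else 3 * N - 1))
       \<and> (p = 3 \<longrightarrow>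
            sym3_conductor p \<mu>1 \<mu>2 =
              (if N = 2 \<and> order_on_units p (\<lambda>x. \<mu>1 x * \<mu>2 x) = 3
               then 2 * N else 3 * N - 1))
       \<and> (p = 2 \<longrightarrow>
            sym3_conductor p \<mu>1 \<mu>2 = (if N > 3 then 3 * N - 1 else 2 * N))"
proof -
  have \<mu>1_units: "\<forall>u\<in>zp_units p. \<mu>1 (0, u) = 1" using assms(6) by (simp add: unramified_def)
  have "cond_exp p \<mu>2 = N"
    using assms(8) cond_exp_cong_units[of p "\<lambda>x. \<mu>1 x * \<mu>2 x" \<mu>2] \<mu>1_units by simp
  then interpret ramified_qchar p \<mu>2 N using assms(1,3,9) by unfold_locales
  have "sym3_conductor p \<mu>1 \<mu>2 = (\<Sum>j\<le>3. pow_cond j)"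
    unfolding sym3_conductor_def using \<mu>1_units by (intro sum.cong refl cond_exp_eq_pow_cond) simp
  also have "\<dots> = N + pow_cond 2 + pow_cond 3"
    by (simp add: eval_nat_numeral pow_cond_0 pow_cond_1[unfolded One_nat_def])
  finally have sym3: "sym3_conductor p \<mu>1 \<mu>2 = N + pow_cond 2 + pow_cond 3" .
  have order: "order_on_units p (\<lambda>x. \<mu>1 x * \<mu>2 x) = order_on_units p \<mu>2"
    using order_on_units_cong_units \<mu>1_units by simp
  show ?thesis
    unfolding sym3 order using sym3_sum_large_prime sym3_sum_three sym3_sum_two by blast
qed

end
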